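(* Let $X\sim p_X$ and $Y\sim p_Y$ be continuous random variables and let $q_{X;m},q_{Y;m}$ be the densities of $\widetilde X_m,\widetilde Y_m$. Then for all $m\in(0,\infty)$, $$\int_{\mathbb R}|q_{X;m}(x)-q_{Y;m}(x)|\,dx\le\int_{\mathbb R}|p_X(x)-p_Y(x)|\,dx .$$ Moreover, for any $\alpha\in(0,\infty)$ and $m\ge4$, if $\mathbb E|X|^\alpha$ exists (is finite), then $$\Pr\big(|X|>\tfrac1{\sqrt m}\big)\,e^{-2\alpha/\sqrt m}\,\mathbb E|X|^\alpha\le\mathbb E|\widetilde X_m|^\alpha\le\Big(\frac2{\sqrt m}\Big)^\alpha+e^{\alpha/\sqrt m}\,\mathbb E|X|^\alpha .$$
   Context: For $m>0$, $[X]_m=\frac1m\lfloor\frac12+mX\rfloor$ with pmf $P_{X;m}[i]=\Pr([X]_m=i/m)=\int_{[(i-0.5)/m,(i+0.5)/m)}p_X$. $\widetilde X_m$ denotes a continuous random variable with density $q_{X;m}(x)=m\,P_{X;m}[i]$ for $x\in[(i-0.5)/m,(i+0.5)/m)$, $i\in\mathbb Z$; similarly $\widetilde Y_m\sim q_{Y;m}$. *)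

theory Defs
  imports "HOL-Analysis.Analysis"
begin

definition is_density :: "(real \<Rightarrow> real) \<Rightarrow> bool" where
  "is_density p \<longleftrightarrow> p \<in> borel_measurable borel \<and> (\<forall>x. 0 \<le> p x)
     \<and> integrable lborel p \<and> integral\<^sup>L lborel p = 1"

definition quant_pmf :: "(real \<Rightarrow> real) \<Rightarrow> real \<Rightarrow> int \<Rightarrow> real" where
  "quant_pmf p m i =
     (LINT x:{(real_of_int i - 1/2) / m ..< (real_of_int i + 1/2) / m}|lborel. p x)"

text \<open>q_{X;m}(x) = m * P_{X;m}[i] for x in [(i - 1/2)/m, (i + 1/2)/m),
  i.e. i = floor(1/2 + m x).\<close>
definition quant_density :: "(real \<Rightarrow> real) \<Rightarrow> real \<Rightarrow> real \<Rightarrow> real" where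
  "quant_density p m x = m * quant_pmf p m \<lfloor>1/2 + m * x\<rfloor>"

end

theory Submission
  imports Defs
begin

text \<open>Quantization is an integral operator, \<open>q(y) = \<integral> K(x,y) p(x) dx\<close>, whose kernel
  \<open>K(x,y)\<close> equals \<open>m\<close> when \<open>x\<close> and \<open>y\<close> lie in the same cell of width \<open>1/m\<close> and \<open>0\<close>
  otherwise. Every row of \<open>K\<close> integrates to \<open>1\<close>, so by Tonelli
  \<open>\<integral> f q = \<integral> p(x) (\<integral> K(x,y) f(y) dy) dx\<close>, and the inner integral is an average of \<open>f\<close>
  over points at distance less than \<open>1/m\<close> from \<open>x\<close>. The \<open>L\<^sup>1\<close> contraction then follows
  from linearity, positivity and preservation of mass. The moment bounds follow from comparing
  \<open>|y|\<^sup>\<alpha>\<close> with \<open>|x|\<^sup>\<alpha>\<close> for \<open>|x - y| < 1/m\<close>; for the lower bound this comparison only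
  works on the tail \<open>|x| > 1/\<surd>m\<close>, and the tail moment dominates \<open>Pr(|X| > 1/\<surd>m) E|X|\<^sup>\<alpha>\<close>
  by Chebyshev's association inequality, \<open>|x|\<^sup>\<alpha>\<close> being larger on the tail than off it.\<close>

definition quant_bin :: "real \<Rightarrow> real \<Rightarrow> int" where
  "quant_bin m x = \<lfloor>1/2 + m * x\<rfloor>"

lemma measurable_quant_bin [measurable]: "quant_bin m \<in> measurable borel (count_space UNIV)"
  unfolding quant_bin_def by measurable

lemma quant_bin_eq_iff:
  assumes "0 < m"
  shows "quant_bin m x = i \<longleftrightarrow> x \<in> {(real_of_int i - 1/2) / m ..< (real_of_int i + 1/2) / m}"
proof -
  have "quant_bin m x = i \<longleftrightarrow> real_of_int i - 1/2 \<le> m * x \<and> m * x < real_of_int i + 1/2"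
    unfolding quant_bin_def floor_eq_iff by argo
  also have "\<dots> \<longleftrightarrow> x \<in> {(real_of_int i - 1/2) / m ..< (real_of_int i + 1/2) / m}"
    using assms by (simp add: pos_divide_le_eq pos_less_divide_eq mult.commute)
  finally show ?thesis .
qed

lemma quant_bin_eq_imp_dist_less:
  assumes "0 < m" "quant_bin m x = quant_bin m y"
  shows "\<bar>x - y\<bar> < 1/m"
proof -
  have "(real_of_int (quant_bin m y) + 1/2) / m - (real_of_int (quant_bin m y) - 1/2) / m = 1/m"
    using assms(1) by (simp add: field_simps)
  then show ?thesis
    using quant_bin_eq_iff[OF assms(1), of x "quant_bin m y"]
      quant_bin_eq_iff[OF assms(1), of y "quant_bin m y"] assms(2)
    by auto
qed

lemma emeasure_quant_bin_cell:
  assumes "0 < m"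
  shows "emeasure lborel {x. quant_bin m x = i} = ennreal (1/m)"
proof -
  have "{x. quant_bin m x = i} = {(real_of_int i - 1/2) / m ..< (real_of_int i + 1/2) / m}"
    using quant_bin_eq_iff[OF assms] by blast
  moreover have "(real_of_int i + 1/2) / m - (real_of_int i - 1/2) / m = 1/m"
    using assms by (simp add: field_simps)
  ultimately show ?thesis
    using assms by (simp add: divide_right_mono)
qed

lemma quant_density_eq_integral:
  assumes "0 < m"
  shows "quant_density p m y
    = m * (LINT x|lborel. indicator {x. quant_bin m x = quant_bin m y} x * p x)"
  unfolding quant_density_def quant_pmf_def set_lebesgue_integral_def
  using quant_bin_eq_iff[OF assms]
  by (auto simp: quant_bin_def indicator_def intro!: arg_cong[where f="(*) m"] Bochner_Integration.integral_cong)

lemma measurable_quant_density [measurable]: "quant_density p m \<in> borel_measurable borel"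
proof -
  have "quant_density p m = (\<lambda>y. m * quant_pmf p m (quant_bin m y))"
    by (simp add: fun_eq_iff quant_density_def quant_bin_def)
  also have "\<dots> \<in> borel_measurable borel"
    by (rule measurable_compose_countable[where g = "quant_bin m"]) auto
  finally show ?thesis .
qed

lemma quant_density_nonneg:
  assumes "0 < m" "\<And>x. 0 \<le> p x"
  shows "0 \<le> quant_density p m y"
  unfolding quant_density_eq_integral[OF assms(1)]
  using assms by (intro mult_nonneg_nonneg integral_nonneg_AE) auto

lemma quant_density_diff:
  assumes "integrable lborel p" "integrable lborel r"
  shows "quant_density (\<lambda>x. p x - r x) m y = quant_density p m y - quant_density r m y"
proof -
  have "set_integrable lborel A p" "set_integrable lborel A r" if "A \<in> sets lborel" for A
    using integrable_mult_indicator[OF that assms(1)] integrable_mult_indicator[OF that assms(2)]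
    by (simp_all add: set_integrable_def)
  then show ?thesis
    by (simp add: quant_density_def quant_pmf_def right_diff_distrib)
qed

lemma abs_quant_density_le:
  assumes "0 < m" "integrable lborel p"
  shows "\<bar>quant_density p m y\<bar> \<le> quant_density (\<lambda>x. \<bar>p x\<bar>) m y"
proof -
  let ?I = "indicator {x. quant_bin m x = quant_bin m y} :: real \<Rightarrow> real"
  have "\<bar>LINT x|lborel. ?I x * p x\<bar> \<le> (LINT x|lborel. \<bar>?I x * p x\<bar>)"
    by (rule integral_abs_bound)
  also have "\<dots> = (LINT x|lborel. ?I x * \<bar>p x\<bar>)"
    by (simp add: abs_mult)
  finally show ?thesis
    unfolding quant_density_eq_integral[OF assms(1)] using assms(1)
    by (simp add: abs_mult)
qed

definition quant_kernel :: "real \<Rightarrow> real \<Rightarrow> real \<Rightarrow> ennreal" where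
  "quant_kernel m x y = (if quant_bin m x = quant_bin m y then ennreal m else 0)"

lemma measurable_quant_kernel [measurable]:
  "(\<lambda>(x, y). quant_kernel m x y) \<in> borel_measurable (lborel \<Otimes>\<^sub>M lborel)"
  unfolding quant_kernel_def by measurable

lemma nn_integral_quant_kernel:
  assumes "0 < m"
  shows "(\<integral>\<^sup>+ y. quant_kernel m x y \<partial>lborel) = 1"
proof -
  have "(\<integral>\<^sup>+ y. quant_kernel m x y \<partial>lborel)
      = (\<integral>\<^sup>+ y. ennreal m * indicator {y. quant_bin m y = quant_bin m x} y \<partial>lborel)"
    by (auto simp: quant_kernel_def indicator_def intro!: nn_integral_cong)
  also have "\<dots> = ennreal m * ennreal (1/m)"
    by (simp add: nn_integral_cmult emeasure_quant_bin_cell[OF assms])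
  also have "\<dots> = 1"
    using assms by (simp flip: ennreal_mult)
  finally show ?thesis .
qed

lemma quant_density_eq_nn_integral:
  assumes "0 < m" "integrable lborel p" "\<And>x. 0 \<le> p x"
  shows "ennreal (quant_density p m y) = (\<integral>\<^sup>+ x. quant_kernel m x y * p x \<partial>lborel)"
proof -
  have [measurable]: "p \<in> borel_measurable borel"
    using borel_measurable_integrable[OF assms(2)] by simp
  let ?I = "indicator {x. quant_bin m x = quant_bin m y} :: real \<Rightarrow> real"
  have "integrable lborel (\<lambda>x. ?I x * p x)"
    using integrable_mult_indicator[OF _ assms(2)] by simp
  then have "ennreal (LINT x|lborel. ?I x * p x) = (\<integral>\<^sup>+ x. ennreal (?I x * p x) \<partial>lborel)"
    using assms(3) by (intro nn_integral_eq_integral[symmetric]) auto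
  also have "\<dots> = (\<integral>\<^sup>+ x. ennreal (?I x) * p x \<partial>lborel)"
    using assms(3) by (intro nn_integral_cong) (simp add: ennreal_mult')
  finally have "ennreal (quant_density p m y) = ennreal m * (\<integral>\<^sup>+ x. ennreal (?I x) * p x \<partial>lborel)"
    using assms(1,3) unfolding quant_density_eq_integral[OF assms(1)]
    by (simp add: ennreal_mult integral_nonneg_AE)
  also have "\<dots> = (\<integral>\<^sup>+ x. quant_kernel m x y * p x \<partial>lborel)"
    by (subst nn_integral_cmult[symmetric])
      (auto simp: quant_kernel_def intro!: nn_integral_cong split: split_indicator)
  finally show ?thesis .
qed

lemma nn_integral_mult_quant_density:
  fixes f :: "real \<Rightarrow> ennreal"
  assumes "0 < m" "integrable lborel p" "\<And>x. 0 \<le> p x"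
    and [measurable]: "f \<in> borel_measurable borel"
  shows "(\<integral>\<^sup>+ y. f y * quant_density p m y \<partial>lborel)
    = (\<integral>\<^sup>+ x. p x * (\<integral>\<^sup>+ y. quant_kernel m x y * f y \<partial>lborel) \<partial>lborel)"
proof -
  have [measurable]: "p \<in> borel_measurable borel"
    using borel_measurable_integrable[OF assms(2)] by simp
  have "(\<integral>\<^sup>+ y. f y * quant_density p m y \<partial>lborel)
      = (\<integral>\<^sup>+ y. (\<integral>\<^sup>+ x. quant_kernel m x y * p x * f y \<partial>lborel) \<partial>lborel)"
    by (intro nn_integral_cong)
      (simp add: quant_density_eq_nn_integral[OF assms(1-3)] nn_integral_cmult[symmetric] mult_ac)
  also have "\<dots> = (\<integral>\<^sup>+ x. (\<integral>\<^sup>+ y. quant_kernel m x y * p x * f y \<partial>lborel) \<partial>lborel)"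
    by (intro lborel_pair.Fubini') (simp add: split_beta')
  also have "\<dots> = (\<integral>\<^sup>+ x. p x * (\<integral>\<^sup>+ y. quant_kernel m x y * f y \<partial>lborel) \<partial>lborel)"
    by (intro nn_integral_cong) (simp add: nn_integral_cmult[symmetric] mult_ac)
  finally show ?thesis .
qed

lemma nn_integral_quant_density:
  assumes "0 < m" "integrable lborel p" "\<And>x. 0 \<le> p x"
  shows "(\<integral>\<^sup>+ y. quant_density p m y \<partial>lborel) = (\<integral>\<^sup>+ x. p x \<partial>lborel)"
  using nn_integral_mult_quant_density[OF assms, of "\<lambda>_. 1"]
  by (simp add: nn_integral_quant_kernel[OF assms(1)])

lemma nn_integral_quant_density_le:
  fixes f g :: "real \<Rightarrow> ennreal"
  assumes "0 < m" "integrable lborel p" "\<And>x. 0 \<le> p x"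
    and [measurable]: "f \<in> borel_measurable borel"
    and near: "\<And>x y. \<bar>x - y\<bar> < 1/m \<Longrightarrow> f y \<le> g x"
  shows "(\<integral>\<^sup>+ y. f y * quant_density p m y \<partial>lborel) \<le> (\<integral>\<^sup>+ x. p x * g x \<partial>lborel)"
proof -
  have "(\<integral>\<^sup>+ y. quant_kernel m x y * f y \<partial>lborel) \<le> g x" for x
  proof -
    have "(\<integral>\<^sup>+ y. quant_kernel m x y * f y \<partial>lborel) \<le> (\<integral>\<^sup>+ y. quant_kernel m x y * g x \<partial>lborel)"
      using near quant_bin_eq_imp_dist_less[OF assms(1)]
      by (intro nn_integral_mono) (auto simp: quant_kernel_def intro!: mult_left_mono)
    also have "\<dots> = g x"
      by (simp add: nn_integral_multc nn_integral_quant_kernel[OF assms(1)])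
    finally show ?thesis .
  qed
  then show ?thesis
    unfolding nn_integral_mult_quant_density[OF assms(1-4)]
    by (intro nn_integral_mono mult_left_mono) auto
qed

lemma nn_integral_quant_density_ge:
  fixes f g :: "real \<Rightarrow> ennreal"
  assumes "0 < m" "integrable lborel p" "\<And>x. 0 \<le> p x"
    and [measurable]: "f \<in> borel_measurable borel"
    and near: "\<And>x y. \<bar>x - y\<bar> < 1/m \<Longrightarrow> g x \<le> f y"
  shows "(\<integral>\<^sup>+ x. p x * g x \<partial>lborel) \<le> (\<integral>\<^sup>+ y. f y * quant_density p m y \<partial>lborel)"
proof -
  have "g x \<le> (\<integral>\<^sup>+ y. quant_kernel m x y * f y \<partial>lborel)" for x
  proof -
    have "g x = (\<integral>\<^sup>+ y. quant_kernel m x y * g x \<partial>lborel)"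
      by (simp add: nn_integral_multc nn_integral_quant_kernel[OF assms(1)])
    also have "\<dots> \<le> (\<integral>\<^sup>+ y. quant_kernel m x y * f y \<partial>lborel)"
      using near quant_bin_eq_imp_dist_less[OF assms(1)]
      by (intro nn_integral_mono) (auto simp: quant_kernel_def intro!: mult_left_mono)
    finally show ?thesis .
  qed
  then show ?thesis
    unfolding nn_integral_mult_quant_density[OF assms(1-4)]
    by (intro nn_integral_mono mult_left_mono) auto
qed

lemma integral_abs_quant_density_diff_le:
  assumes "0 < m" "integrable lborel p" "integrable lborel r"
  shows "(LINT x|lborel. \<bar>quant_density p m x - quant_density r m x\<bar>)
    \<le> (LINT x|lborel. \<bar>p x - r x\<bar>)"
proof -
  have int_diff: "integrable lborel (\<lambda>x. \<bar>p x - r x\<bar>)"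
    using assms(2,3) by auto
  have "(\<integral>\<^sup>+ x. \<bar>quant_density p m x - quant_density r m x\<bar> \<partial>lborel)
      \<le> (\<integral>\<^sup>+ x. quant_density (\<lambda>x. \<bar>p x - r x\<bar>) m x \<partial>lborel)"
    using abs_quant_density_le[OF assms(1), of "\<lambda>x. p x - r x"] assms(2,3)
    by (intro nn_integral_mono ennreal_leI) (simp add: quant_density_diff)
  also have "\<dots> = (\<integral>\<^sup>+ x. \<bar>p x - r x\<bar> \<partial>lborel)"
    using assms(1) int_diff by (simp add: nn_integral_quant_density)
  finally have "(\<integral>\<^sup>+ x. \<bar>quant_density p m x - quant_density r m x\<bar> \<partial>lborel)
      \<le> (\<integral>\<^sup>+ x. \<bar>p x - r x\<bar> \<partial>lborel)" .
  moreover have "(\<integral>\<^sup>+ x. \<bar>p x - r x\<bar> \<partial>lborel) < \<infinity>"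
    using int_diff by (simp add: integrable_iff_bounded)
  moreover have "p \<in> borel_measurable borel" "r \<in> borel_measurable borel"
    using borel_measurable_integrable[OF assms(2)] borel_measurable_integrable[OF assms(3)] by simp_all
  ultimately show ?thesis
    by (simp add: integral_eq_nn_integral enn2real_mono)
qed

lemma abs_powr_le_of_dist_less:
  fixes x y m \<alpha> :: real
  assumes m: "4 \<le> m" and a: "0 < \<alpha>" and near: "\<bar>x - y\<bar> < 1/m"
  shows "\<bar>y\<bar> powr \<alpha> \<le> (2 / sqrt m) powr \<alpha> + exp (\<alpha> / sqrt m) * \<bar>x\<bar> powr \<alpha>"
proof -
  define u where "u = 1 / sqrt m"
  have u: "0 < u" "u \<le> 1/2" "1/m = u * u"
    using m real_sqrt_le_mono[of 4 m] by (auto simp: u_def field_simps)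
  have y_le: "\<bar>y\<bar> \<le> \<bar>x\<bar> + u * u"
    using near u(3) by linarith
  show ?thesis
  proof (cases "\<bar>x\<bar> \<le> u")
    case True
    have "u * u \<le> u"
      using u by (simp add: mult_left_le)
    then have "\<bar>y\<bar> powr \<alpha> \<le> (2 / sqrt m) powr \<alpha>"
      using y_le True a by (intro powr_mono2) (auto simp: u_def)
    then show ?thesis
      by (simp add: add_increasing2)
  next
    case False
    have "u * u \<le> u * \<bar>x\<bar>"
      using False u(1) by (intro mult_left_mono) auto
    then have "\<bar>y\<bar> \<le> \<bar>x\<bar> * (1 + u)"
      using y_le by (simp add: algebra_simps)
    also have "\<dots> \<le> \<bar>x\<bar> * exp u"
      by (intro mult_left_mono) (simp_all add: add.commute exp_ge_add_one_self)
    finally have "\<bar>y\<bar> powr \<alpha> \<le> (\<bar>x\<bar> * exp u) powr \<alpha>"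
      using a by (intro powr_mono2) auto
    also have "\<dots> = exp (\<alpha> / sqrt m) * \<bar>x\<bar> powr \<alpha>"
      by (simp add: powr_mult exp_powr_real u_def)
    finally show ?thesis
      by (simp add: add_increasing)
  qed
qed

lemma abs_powr_ge_of_dist_less:
  fixes x y m \<alpha> :: real
  assumes m: "4 \<le> m" and a: "0 < \<alpha>" and near: "\<bar>x - y\<bar> < 1/m" and far: "1 / sqrt m < \<bar>x\<bar>"
  shows "exp (- 2 * \<alpha> / sqrt m) * \<bar>x\<bar> powr \<alpha> \<le> \<bar>y\<bar> powr \<alpha>"
proof -
  define u where "u = 1 / sqrt m"
  have u: "0 < u" "u \<le> 1/2" "1/m = u * u"
    using m real_sqrt_le_mono[of 4 m] by (auto simp: u_def field_simps)
  have "\<bar>x\<bar> * (1 - u) \<le> \<bar>y\<bar>"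
    using near far u mult_strict_right_mono[of u "\<bar>x\<bar>" u] by (simp add: u_def algebra_simps)
  moreover have "exp (- 2 * u) \<le> 1 - u"
  proof -
    have "1 \<le> (1 - u) * (1 + 2 * u)"
      using u by (simp add: algebra_simps)
    also have "\<dots> \<le> (1 - u) * exp (2 * u)"
      using u exp_ge_add_one_self[of "2 * u"] by (intro mult_left_mono) auto
    finally show ?thesis
      by (simp add: exp_minus field_simps)
  qed
  ultimately have "\<bar>x\<bar> * exp (- 2 * u) \<le> \<bar>y\<bar>"
    by (meson abs_ge_zero mult_left_mono order_trans)
  then have "(\<bar>x\<bar> * exp (- 2 * u)) powr \<alpha> \<le> \<bar>y\<bar> powr \<alpha>"
    using a by (intro powr_mono2) auto
  then show ?thesis
    by (simp add: powr_mult exp_powr_real u_def mult.commute)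
qed

lemma density_mass_mult_integral_le_set_integral:
  fixes p f :: "real \<Rightarrow> real"
  assumes p: "is_density p" and int_f: "integrable lborel (\<lambda>x. f x * p x)"
    and A: "A \<in> sets borel"
    and above: "\<And>x. x \<in> A \<Longrightarrow> T \<le> f x" and below: "\<And>x. x \<notin> A \<Longrightarrow> f x \<le> T"
  shows "(LINT x:A|lborel. p x) * (LINT x|lborel. f x * p x) \<le> (LINT x:A|lborel. f x * p x)"
proof -
  have int_p: "integrable lborel p" and p0: "\<And>x. 0 \<le> p x" and mass: "(LINT x|lborel. p x) = 1"
    using p by (auto simp: is_density_def)
  have set_int: "set_integrable lborel B g" if "B \<in> sets borel" "integrable lborel g" for B and g :: "real \<Rightarrow> real"
    using integrable_mult_indicator[of B lborel g] that by (simp add: set_integrable_def)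
  have split: "(LINT x|lborel. g x) = (LINT x:A|lborel. g x) + (LINT x:-A|lborel. g x)"
    if "integrable lborel g" for g :: "real \<Rightarrow> real"
    using set_integral_Un[of A "-A" lborel g] set_int[OF A that] set_int[OF _ that] A
    by (simp add: set_integral_space[OF that, simplified])
  define P Q where "P = (LINT x:A|lborel. p x)" and "Q = (LINT x:-A|lborel. p x)"
  define a b where "a = (LINT x:A|lborel. f x * p x)" and "b = (LINT x:-A|lborel. f x * p x)"
  have P0: "0 \<le> P" and Q0: "0 \<le> Q"
    unfolding P_def Q_def set_lebesgue_integral_def using p0 by (auto intro!: integral_nonneg_AE)
  have PQ: "P + Q = 1"
    using split[OF int_p] mass by (simp add: P_def Q_def)
  have "T * P \<le> a"
    unfolding P_def a_def set_integral_mult_right[symmetric]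
    using above p0 set_int[OF A int_p] set_int[OF A int_f]
    by (intro set_integral_mono) (auto intro: mult_right_mono)
  then have Qa: "Q * (T * P) \<le> Q * a"
    using Q0 by (rule mult_left_mono)
  have "b \<le> T * Q"
    unfolding Q_def b_def set_integral_mult_right[symmetric]
    using below p0 A set_int[OF _ int_p] set_int[OF _ int_f]
    by (intro set_integral_mono) (auto intro: mult_right_mono)
  then have "P * (a + b) \<le> P * a + Q * (T * P)"
    using P0 by (simp add: distrib_left mult_left_mono mult_ac)
  also have "\<dots> \<le> (P + Q) * a"
    using Qa by (simp add: distrib_right)
  finally have "P * (a + b) \<le> a"
    by (simp add: PQ)
  then show ?thesis
    using split[OF int_f] by (simp add: P_def a_def b_def)
qed

lemma nn_integral_quant_moment_le:
  assumes p: "is_density p" and a: "0 < \<alpha>" and m: "4 \<le> m"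
    and int_mom: "integrable lborel (\<lambda>x. \<bar>x\<bar> powr \<alpha> * p x)"
  shows "(\<integral>\<^sup>+ y. \<bar>y\<bar> powr \<alpha> * quant_density p m y \<partial>lborel)
    \<le> ennreal ((2 / sqrt m) powr \<alpha> + exp (\<alpha> / sqrt m) * (LINT x|lborel. \<bar>x\<bar> powr \<alpha> * p x))"
proof -
  have int_p: "integrable lborel p" and p0: "\<And>x. 0 \<le> p x" and mass: "(LINT x|lborel. p x) = 1"
    using p by (auto simp: is_density_def)
  define C e where "C = (2 / sqrt m) powr \<alpha>" and "e = exp (\<alpha> / sqrt m)"
  have int_bound: "integrable lborel (\<lambda>x. C * p x + e * (\<bar>x\<bar> powr \<alpha> * p x))"
    using int_p int_mom by auto
  have "(\<integral>\<^sup>+ y. \<bar>y\<bar> powr \<alpha> * quant_density p m y \<partial>lborel)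
      = (\<integral>\<^sup>+ y. ennreal (\<bar>y\<bar> powr \<alpha>) * quant_density p m y \<partial>lborel)"
    using quant_density_nonneg[of m p] m p0 by (intro nn_integral_cong) (simp add: ennreal_mult)
  also have "\<dots> \<le> (\<integral>\<^sup>+ x. p x * ennreal (C + e * \<bar>x\<bar> powr \<alpha>) \<partial>lborel)"
    using m a int_p p0 abs_powr_le_of_dist_less[OF m a]
    by (intro nn_integral_quant_density_le ennreal_leI) (auto simp: C_def e_def)
  also have "\<dots> = (\<integral>\<^sup>+ x. C * p x + e * (\<bar>x\<bar> powr \<alpha> * p x) \<partial>lborel)"
    using p0 by (intro nn_integral_cong) (simp add: ennreal_mult'[symmetric] algebra_simps)
  also have "\<dots> = C * (LINT x|lborel. p x) + e * (LINT x|lborel. \<bar>x\<bar> powr \<alpha> * p x)"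
    using int_bound int_p int_mom p0 by (subst nn_integral_eq_integral) (auto simp: C_def e_def)
  finally show ?thesis
    by (simp add: mass C_def e_def)
qed

lemma integrable_quant_moment:
  assumes "is_density p" "0 < \<alpha>" "4 \<le> m" "integrable lborel (\<lambda>x. \<bar>x\<bar> powr \<alpha> * p x)"
  shows "integrable lborel (\<lambda>x. \<bar>x\<bar> powr \<alpha> * quant_density p m x)"
  using nn_integral_quant_moment_le[OF assms] quant_density_nonneg[of m p] assms(1,3)
  by (intro integrableI_nonneg) (auto simp: is_density_def top.not_eq_extremum le_less_trans)

lemma integral_quant_moment_le:
  assumes "is_density p" "0 < \<alpha>" "4 \<le> m" "integrable lborel (\<lambda>x. \<bar>x\<bar> powr \<alpha> * p x)"
  shows "(LINT x|lborel. \<bar>x\<bar> powr \<alpha> * quant_density p m x)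
    \<le> (2 / sqrt m) powr \<alpha> + exp (\<alpha> / sqrt m) * (LINT x|lborel. \<bar>x\<bar> powr \<alpha> * p x)"
proof -
  have "0 \<le> (LINT x|lborel. \<bar>x\<bar> powr \<alpha> * p x)"
    using assms(1) by (auto simp: is_density_def intro!: integral_nonneg_AE)
  then have bound_nonneg: "0 \<le> (2 / sqrt m) powr \<alpha> + exp (\<alpha> / sqrt m) * (LINT x|lborel. \<bar>x\<bar> powr \<alpha> * p x)"
    by simp
  have "(\<integral>\<^sup>+ y. \<bar>y\<bar> powr \<alpha> * quant_density p m y \<partial>lborel)
      = ennreal (LINT x|lborel. \<bar>x\<bar> powr \<alpha> * quant_density p m x)"
    using quant_density_nonneg[of m p] assms(1,3)
    by (intro nn_integral_eq_integral integrable_quant_moment[OF assms]) (auto simp: is_density_def)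
  then show ?thesis
    using nn_integral_quant_moment_le[OF assms] bound_nonneg by (simp only: ennreal_le_iff)
qed

lemma set_integral_moment_le_quant_moment:
  assumes p: "is_density p" and a: "0 < \<alpha>" and m: "4 \<le> m"
    and int_mom: "integrable lborel (\<lambda>x. \<bar>x\<bar> powr \<alpha> * p x)"
  shows "exp (- 2 * \<alpha> / sqrt m) * (LINT x:{x. \<bar>x\<bar> > 1 / sqrt m}|lborel. \<bar>x\<bar> powr \<alpha> * p x)
    \<le> (LINT x|lborel. \<bar>x\<bar> powr \<alpha> * quant_density p m x)"
proof -
  have int_p: "integrable lborel p" and p0: "\<And>x. 0 \<le> p x"
    using p by (auto simp: is_density_def)
  define c A where "c = exp (- 2 * \<alpha> / sqrt m)" and "A = {x::real. \<bar>x\<bar> > 1 / sqrt m}"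
  have [measurable]: "A \<in> sets borel"
    unfolding A_def by measurable
  have int_tail: "integrable lborel (\<lambda>x. c * (indicator A x * (\<bar>x\<bar> powr \<alpha> * p x)))"
    using integrable_mult_indicator[of A lborel, OF _ int_mom] by simp
  have "ennreal (c * (LINT x:A|lborel. \<bar>x\<bar> powr \<alpha> * p x))
      = (\<integral>\<^sup>+ x. c * (indicator A x * (\<bar>x\<bar> powr \<alpha> * p x)) \<partial>lborel)"
    using int_tail p0
    by (subst nn_integral_eq_integral) (auto simp: set_lebesgue_integral_def c_def)
  also have "\<dots> = (\<integral>\<^sup>+ x. p x * ennreal (indicator A x * (c * \<bar>x\<bar> powr \<alpha>)) \<partial>lborel)"
    using p0 by (intro nn_integral_cong) (simp add: ennreal_mult'[symmetric] mult_ac c_def)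
  also have "\<dots> \<le> (\<integral>\<^sup>+ y. ennreal (\<bar>y\<bar> powr \<alpha>) * quant_density p m y \<partial>lborel)"
    using m a int_p p0 abs_powr_ge_of_dist_less[OF m a]
    by (intro nn_integral_quant_density_ge ennreal_leI)
      (auto simp: c_def A_def split: split_indicator)
  also have "\<dots> = (LINT x|lborel. \<bar>x\<bar> powr \<alpha> * quant_density p m x)"
    using integrable_quant_moment[OF assms] quant_density_nonneg[of m p] p0 m
    by (subst nn_integral_eq_integral[symmetric]) (auto simp: ennreal_mult)
  moreover have "0 \<le> (LINT x|lborel. \<bar>x\<bar> powr \<alpha> * quant_density p m x)"
    using quant_density_nonneg[of m p] p0 m by (intro integral_nonneg_AE) auto
  ultimately show ?thesis
    by (simp add: A_def c_def)
qed

lemma integral_quant_moment_ge: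
  assumes p: "is_density p" and a: "0 < \<alpha>" and m: "4 \<le> m"
    and int_mom: "integrable lborel (\<lambda>x. \<bar>x\<bar> powr \<alpha> * p x)"
  shows "(LINT x:{x. \<bar>x\<bar> > 1 / sqrt m}|lborel. p x) * exp (- 2 * \<alpha> / sqrt m)
      * (LINT x|lborel. \<bar>x\<bar> powr \<alpha> * p x)
    \<le> (LINT x|lborel. \<bar>x\<bar> powr \<alpha> * quant_density p m x)"
proof -
  have "(LINT x:{x. \<bar>x\<bar> > 1 / sqrt m}|lborel. p x) * (LINT x|lborel. \<bar>x\<bar> powr \<alpha> * p x)
      \<le> (LINT x:{x. \<bar>x\<bar> > 1 / sqrt m}|lborel. \<bar>x\<bar> powr \<alpha> * p x)"
    using a m int_mom
    by (intro density_mass_mult_integral_le_set_integral[OF p, where T = "(1 / sqrt m) powr \<alpha>"])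
      (auto intro: powr_mono2)
  then have "exp (- 2 * \<alpha> / sqrt m) * ((LINT x:{x. \<bar>x\<bar> > 1 / sqrt m}|lborel. p x)
      * (LINT x|lborel. \<bar>x\<bar> powr \<alpha> * p x))
    \<le> exp (- 2 * \<alpha> / sqrt m) * (LINT x:{x. \<bar>x\<bar> > 1 / sqrt m}|lborel. \<bar>x\<bar> powr \<alpha> * p x)"
    by (rule mult_left_mono) simp
  also have "\<dots> \<le> (LINT x|lborel. \<bar>x\<bar> powr \<alpha> * quant_density p m x)"
    by (rule set_integral_moment_le_quant_moment[OF assms])
  finally show ?thesis
    by (simp only: mult_ac)
qed

theorem mainTheorem12:
  fixes pX pY :: "real \<Rightarrow> real"
  assumes dX: "is_density pX" and dY: "is_density pY"
  shows "(\<forall>m::real. 0 < m \<longrightarrow>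
           (LINT x|lborel. \<bar>quant_density pX m x - quant_density pY m x\<bar>)
             \<le> (LINT x|lborel. \<bar>pX x - pY x\<bar>))
      \<and> (\<forall>(\<alpha>::real) (m::real). 0 < \<alpha> \<longrightarrow> 4 \<le> m \<longrightarrow>
           integrable lborel (\<lambda>x. \<bar>x\<bar> powr \<alpha> * pX x) \<longrightarrow>
             integrable lborel (\<lambda>x. \<bar>x\<bar> powr \<alpha> * quant_density pX m x)
           \<and> (LINT x:{x. \<bar>x\<bar> > 1 / sqrt m}|lborel. pX x) * exp (- 2 * \<alpha> / sqrt m)
               * (LINT x|lborel. \<bar>x\<bar> powr \<alpha> * pX x)
             \<le> (LINT x|lborel. \<bar>x\<bar> powr \<alpha> * quant_density pX m x)
           \<and> (LINT x|lborel. \<bar>x\<bar> powr \<alpha> * quant_density pX m x)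
             \<le> (2 / sqrt m) powr \<alpha> + exp (\<alpha> / sqrt m) * (LINT x|lborel. \<bar>x\<bar> powr \<alpha> * pX x))"
proof (intro conjI allI impI)
  show "(LINT x|lborel. \<bar>quant_density pX m x - quant_density pY m x\<bar>)
      \<le> (LINT x|lborel. \<bar>pX x - pY x\<bar>)" if "0 < m" for m
    using integral_abs_quant_density_diff_le[OF that] dX dY by (simp add: is_density_def)
next
  fix \<alpha> m :: real
  assume moment: "0 < \<alpha>" "4 \<le> m" "integrable lborel (\<lambda>x. \<bar>x\<bar> powr \<alpha> * pX x)"
  then show "integrable lborel (\<lambda>x. \<bar>x\<bar> powr \<alpha> * quant_density pX m x)"
    and "(LINT x|lborel. \<bar>x\<bar> powr \<alpha> * quant_density pX m x)
      \<le> (2 / sqrt m) powr \<alpha> + exp (\<alpha> / sqrt m) * (LINT x|lborel. \<bar>x\<bar> powr \<alpha> * pX x)"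
    using integrable_quant_moment integral_quant_moment_le dX by blast+
  show "(LINT x:{x. \<bar>x\<bar> > 1 / sqrt m}|lborel. pX x) * exp (- 2 * \<alpha> / sqrt m)
      * (LINT x|lborel. \<bar>x\<bar> powr \<alpha> * pX x)
    \<le> (LINT x|lborel. \<bar>x\<bar> powr \<alpha> * quant_density pX m x)"
    by (rule integral_quant_moment_ge[OF dX moment])
qed

end
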